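(* Let $Q$ be a quiver and suppose $(kQ,\Delta,\varepsilon,\mathrm{M},\mu,\Phi,\mathcal S,\alpha,\beta)$ is a graded Majid algebra structure on the path coalgebra $kQ$. Then $\mathrm{M}(Q_0\otimes Q_0)\subseteq Q_0$, and $Q_0$ with the binary operation $(g,h)\mapsto gh=\mathrm{M}(g\otimes h)$ is a group $G$ with identity $1$ and inverse $g^{-1}=\mathcal S(g)$. Moreover, writing $M=kQ_1$ and ${}^gM^h$ for the span of arrows with source $h$ and target $g$, for all $f,g,h\in G$ one has $f.\,{}^gM^h={}^{fg}M^{fh}$ and ${}^gM^h.f={}^{gf}M^{hf}$ (where $f.m=\mathrm{M}(f\otimes m)$, $m.f=\mathrm{M}(m\otimes f)$), and for $e,f,g,h\in G$, $m\in{}^gM^h$: $e.(f.m)=\frac{\Phi(e,f,g)}{\Phi(e,f,h)}(ef).m$, $(m.e).f=\frac{\Phi(h,e,f)}{\Phi(g,e,f)}m.(ef)$, $(e.m).f=\frac{\Phi(e,h,f)}{\Phi(e,g,f)}e.(m.f)$. In particular the number of arrows from $x$ to $g^{-1}cgx$ equals the number of arrows from $1$ to $c$, for all $x,g,c\in G$.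
   Context: A Majid algebra (dual quasi-Hopf algebra) over $k$ is a coalgebra $(H,\Delta,\varepsilon)$ (Sweedler notation $\Delta(a)=a_1\otimes a_2$) together with coalgebra maps $\mathrm{M}:H\otimes H\to H$, $a\otimes b\mapsto ab$, and $\mu:k\to H$, $\lambda\mapsto\lambda 1_H$, a convolution-invertible linear map $\Phi:H^{\otimes 3}\to k$ (the reassociator), a coalgebra antimorphism $\mathcal S:H\to H$ and linear maps $\alpha,\beta:H\to k$ such that for all $a,b,c,d\in H$: (i) $a_1(b_1c_1)\Phi(a_2,b_2,c_2)=\Phi(a_1,b_1,c_1)(a_2b_2)c_2$; (ii) $1_Ha=a=a1_H$; (iii) $\Phi(a_1,b_1,c_1d_1)\Phi(a_2b_2,c_2,d_2)=\Phi(b_1,c_1,d_1)\Phi(a_1,b_2c_2,d_2)\Phi(a_2,b_3,c_3)$; (iv) $\Phi(a,1_H,b)=\varepsilon(a)\varepsilon(b)$; (v) $\mathcal S(a_1)\alpha(a_2)a_3=\alpha(a)1_H$ and $a_1\beta(a_2)\mathcal S(a_3)=\beta(a)1_H$; (vi) $\Phi(a_1,\mathcal S(a_3),a_5)\beta(a_2)\alpha(a_4)=\Phi^{-1}(\mathcal S(a_1),a_3,\mathcal S(a_5))\alpha(a_2)\beta(a_4)=\varepsilon(a)$. A quiver $Q=(Q_0,Q_1,s,t)$ has vertex set $Q_0$, arrow set $Q_1$, source and target maps $s,t$. Paths of length $n$ form the set $Q_n$ (vertices are paths of length 0). The path coalgebra $kQ$ has basis all paths, with $\Delta(g)=g\otimes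 g$, $\varepsilon(g)=1$ for vertices and, for $p=a_n\cdots a_1$, $\varepsilon(p)=0$, $\Delta(p)=p\otimes s(a_1)+\sum_{i=1}^{n-1}a_n\cdots a_{i+1}\otimes a_i\cdots a_1+t(a_n)\otimes p$; it is graded by length. A graded Majid algebra structure on $kQ$ is a Majid algebra structure on the coalgebra $kQ$ with $\mathrm{M}(kQ_i\otimes kQ_j)\subseteq kQ_{i+j}$, $1\in kQ_0$, $\mathcal S(kQ_n)\subseteq kQ_n$, and $\Phi,\alpha,\beta$ vanishing whenever some homogeneous argument has positive degree. *)

theory Defs
  imports "HOL-Algebra.Group"
begin

text \<open>A quiver: vertex set = the type 'v (nonempty; any graded Majid algebra
 structure forces Q_0 nonempty anyway), arrow set arr Q, source/target maps.\<close>
record ('v,'a) quiver =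
  arr :: "'a set"
  src :: "'a \<Rightarrow> 'v"
  tgt :: "'a \<Rightarrow> 'v"

text \<open>A path (v, [a1,...,an]) is the path p = an...a1 starting at vertex v;
 (v, []) is the trivial path (vertex) v.\<close>
type_synonym ('v,'a) path = "'v \<times> 'a list"

definition is_path :: "('v,'a,'b) quiver_scheme \<Rightarrow> ('v,'a) path \<Rightarrow> bool" where
  "is_path Q p \<longleftrightarrow> set (snd p) \<subseteq> arr Q \<and>
     (snd p \<noteq> [] \<longrightarrow> src Q (hd (snd p)) = fst p) \<and>
     (\<forall>i. Suc i < length (snd p) \<longrightarrow> src Q (snd p ! Suc i) = tgt Q (snd p ! i))"

definition ptgt :: "('v,'a,'b) quiver_scheme \<Rightarrow> ('v,'a) path \<Rightarrow> 'v" where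
  "ptgt Q p = (if snd p = [] then fst p else tgt Q (last (snd p)))"

definition plen :: "('v,'a) path \<Rightarrow> nat" where
  "plen p = length (snd p)"

text \<open>pprefix i p = a_i...a_1, psuffix i p = a_n...a_{i+1}\<close>
definition pprefix :: "nat \<Rightarrow> ('v,'a) path \<Rightarrow> ('v,'a) path" where
  "pprefix i p = (fst p, take i (snd p))"

definition psuffix :: "('v,'a,'b) quiver_scheme \<Rightarrow> nat \<Rightarrow> ('v,'a) path \<Rightarrow> ('v,'a) path" where
  "psuffix Q i p = (ptgt Q (pprefix i p), drop i (snd p))"

text \<open>Iterated coproduct of a path in Sweedler order: splits Q n p lists the
 terms [p_1, ..., p_n] of Delta^(n-1)(p) = sum p_1 \<otimes> ... \<otimes> p_n.\<close>
fun splits :: "('v,'a,'b) quiver_scheme \<Rightarrow> nat \<Rightarrow> ('v,'a) path \<Rightarrow> ('v,'a) path list list" where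
  "splits Q 0 p = []"
| "splits Q (Suc 0) p = [[p]]"
| "splits Q (Suc (Suc n)) p =
     concat (map (\<lambda>i. map (\<lambda>L. L @ [pprefix i p]) (splits Q (Suc n) (psuffix Q i p)))
                 [0..<Suc (plen p)])"

type_synonym ('v,'a,'k) vec = "('v,'a) path \<Rightarrow> 'k"

definition supp :: "('x \<Rightarrow> 'k::zero) \<Rightarrow> 'x set" where
  "supp x = {p. x p \<noteq> 0}"

definition kQ :: "('v,'a,'b) quiver_scheme \<Rightarrow> ('v,'a,'k::zero) vec set" where
  "kQ Q = {x. finite (supp x) \<and> (\<forall>p\<in>supp x. is_path Q p)}"

definition delta :: "('v,'a) path \<Rightarrow> ('v,'a,'k::{zero,one}) vec" where
  "delta p = (\<lambda>q. if q = p then 1 else 0)"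

definition scal :: "'k::times \<Rightarrow> ('x \<Rightarrow> 'k) \<Rightarrow> ('x \<Rightarrow> 'k)" where
  "scal c x = (\<lambda>r. c * x r)"

definition eps :: "('v,'a) path \<Rightarrow> 'k::{zero,one}" where
  "eps p = (if plen p = 0 then 1 else 0)"

definition epsv :: "('v,'a,'k::comm_ring_1) vec \<Rightarrow> 'k" where
  "epsv x = (\<Sum>p\<in>supp x. x p * eps p)"

text \<open>comultiplication of a vector, as an element of kQ \<otimes> kQ = functions on pairs
 of paths: the coefficient of l \<otimes> r is the coefficient of the concatenation l r.\<close>
definition comul :: "('v,'a,'b) quiver_scheme \<Rightarrow> ('v,'a,'k::zero) vec \<Rightarrow> ('v,'a) path \<times> ('v,'a) path \<Rightarrow> 'k" where
  "comul Q x lr = (if fst (fst lr) = ptgt Q (snd lr)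
                   then x (fst (snd lr), snd (snd lr) @ snd (fst lr)) else 0)"

definition vmult :: "(('v,'a) path \<Rightarrow> ('v,'a) path \<Rightarrow> ('v,'a,'k::comm_ring_1) vec)
   \<Rightarrow> ('v,'a,'k) vec \<Rightarrow> ('v,'a,'k) vec \<Rightarrow> ('v,'a,'k) vec" where
  "vmult M x y = (\<lambda>r. \<Sum>p\<in>supp x. \<Sum>q\<in>supp y. x p * y q * M p q r)"

definition phiv :: "(('v,'a) path \<Rightarrow> ('v,'a) path \<Rightarrow> ('v,'a) path \<Rightarrow> 'k::comm_ring_1)
   \<Rightarrow> ('v,'a,'k) vec \<Rightarrow> ('v,'a,'k) vec \<Rightarrow> ('v,'a,'k) vec \<Rightarrow> 'k" where
  "phiv Phi x y z = (\<Sum>p\<in>supp x. \<Sum>q\<in>supp y. \<Sum>r\<in>supp z. x p * y q * z r * Phi p q r)"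

text \<open>All structure maps are linear, hence given by their values on the basis of paths:
 M p q = M(p \<otimes> q), u = 1_H, Phi, Phiinv (the convolution inverse of Phi),
 S p, alpha p, beta p.  Axioms are stated for basis elements (all are multilinear).\<close>
definition graded_majid ::
  "('v,'a,'b) quiver_scheme
   \<Rightarrow> (('v,'a) path \<Rightarrow> ('v,'a) path \<Rightarrow> ('v,'a,'k::field) vec)
   \<Rightarrow> ('v,'a,'k) vec
   \<Rightarrow> (('v,'a) path \<Rightarrow> ('v,'a) path \<Rightarrow> ('v,'a) path \<Rightarrow> 'k)
   \<Rightarrow> (('v,'a) path \<Rightarrow> ('v,'a) path \<Rightarrow> ('v,'a) path \<Rightarrow> 'k)
   \<Rightarrow> (('v,'a) path \<Rightarrow> ('v,'a,'k) vec)
   \<Rightarrow> (('v,'a) path \<Rightarrow> 'k) \<Rightarrow> (('v,'a) path \<Rightarrow> 'k) \<Rightarrow> bool" where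
  "graded_majid Q M u Phi Phiinv S alpha beta \<longleftrightarrow>
    \<comment> \<open>maps land in kQ\<close>
    u \<in> kQ Q \<and>
    (\<forall>a b. is_path Q a \<longrightarrow> is_path Q b \<longrightarrow> M a b \<in> kQ Q) \<and>
    (\<forall>a. is_path Q a \<longrightarrow> S a \<in> kQ Q) \<and>
    \<comment> \<open>M is a coalgebra map\<close>
    (\<forall>a b. is_path Q a \<longrightarrow> is_path Q b \<longrightarrow>
       (\<forall>l r. comul Q (M a b) (l, r) =
          (\<Sum>A\<leftarrow>splits Q 2 a. \<Sum>B\<leftarrow>splits Q 2 b. M (A!0) (B!0) l * M (A!1) (B!1) r)) \<and>
       epsv (M a b) = eps a * eps b) \<and>
    \<comment> \<open>mu is a coalgebra map\<close>
    (\<forall>l r. comul Q u (l, r) = u l * u r) \<and> epsv u = 1 \<and>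
    \<comment> \<open>S is a coalgebra antimorphism\<close>
    (\<forall>a. is_path Q a \<longrightarrow>
       (\<forall>l r. comul Q (S a) (l, r) = (\<Sum>A\<leftarrow>splits Q 2 a. S (A!1) l * S (A!0) r)) \<and>
       epsv (S a) = eps a) \<and>
    \<comment> \<open>Phiinv is the convolution inverse of Phi\<close>
    (\<forall>a b c. is_path Q a \<longrightarrow> is_path Q b \<longrightarrow> is_path Q c \<longrightarrow>
       (\<Sum>A\<leftarrow>splits Q 2 a. \<Sum>B\<leftarrow>splits Q 2 b. \<Sum>C\<leftarrow>splits Q 2 c.
          Phi (A!0) (B!0) (C!0) * Phiinv (A!1) (B!1) (C!1)) = eps a * eps b * eps c \<and>
       (\<Sum>A\<leftarrow>splits Q 2 a. \<Sum>B\<leftarrow>splits Q 2 b. \<Sum>C\<leftarrow>splits Q 2 c.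
          Phiinv (A!0) (B!0) (C!0) * Phi (A!1) (B!1) (C!1)) = eps a * eps b * eps c) \<and>
    \<comment> \<open>(i) quasi-associativity\<close>
    (\<forall>a b c. is_path Q a \<longrightarrow> is_path Q b \<longrightarrow> is_path Q c \<longrightarrow> (\<forall>r.
       (\<Sum>A\<leftarrow>splits Q 2 a. \<Sum>B\<leftarrow>splits Q 2 b. \<Sum>C\<leftarrow>splits Q 2 c.
          vmult M (delta (A!0)) (M (B!0) (C!0)) r * Phi (A!1) (B!1) (C!1)) =
       (\<Sum>A\<leftarrow>splits Q 2 a. \<Sum>B\<leftarrow>splits Q 2 b. \<Sum>C\<leftarrow>splits Q 2 c.
          Phi (A!0) (B!0) (C!0) * vmult M (M (A!1) (B!1)) (delta (C!1)) r))) \<and>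
    \<comment> \<open>(ii) unit\<close>
    (\<forall>a. is_path Q a \<longrightarrow> vmult M u (delta a) = delta a \<and> vmult M (delta a) u = delta a) \<and>
    \<comment> \<open>(iii) 3-cocycle condition\<close>
    (\<forall>a b c d. is_path Q a \<longrightarrow> is_path Q b \<longrightarrow> is_path Q c \<longrightarrow> is_path Q d \<longrightarrow>
       (\<Sum>A\<leftarrow>splits Q 2 a. \<Sum>B\<leftarrow>splits Q 2 b. \<Sum>C\<leftarrow>splits Q 2 c. \<Sum>D\<leftarrow>splits Q 2 d.
          phiv Phi (delta (A!0)) (delta (B!0)) (M (C!0) (D!0)) *
          phiv Phi (M (A!1) (B!1)) (delta (C!1)) (delta (D!1))) =
       (\<Sum>A\<leftarrow>splits Q 2 a. \<Sum>B\<leftarrow>splits Q 3 b. \<Sum>C\<leftarrow>splits Q 3 c. \<Sum>D\<leftarrow>splits Q 2 d.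
          Phi (B!0) (C!0) (D!0) * phiv Phi (delta (A!0)) (M (B!1) (C!1)) (delta (D!1)) *
          Phi (A!1) (B!2) (C!2))) \<and>
    \<comment> \<open>(iv) normalization\<close>
    (\<forall>a b. is_path Q a \<longrightarrow> is_path Q b \<longrightarrow> phiv Phi (delta a) u (delta b) = eps a * eps b) \<and>
    \<comment> \<open>(v) antipode axioms\<close>
    (\<forall>a. is_path Q a \<longrightarrow> (\<forall>r.
       (\<Sum>A\<leftarrow>splits Q 3 a. alpha (A!1) * vmult M (S (A!0)) (delta (A!2)) r) = alpha a * u r \<and>
       (\<Sum>A\<leftarrow>splits Q 3 a. beta (A!1) * vmult M (delta (A!0)) (S (A!2)) r) = beta a * u r)) \<and>
    \<comment> \<open>(vi)\<close>
    (\<forall>a. is_path Q a \<longrightarrow>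
       (\<Sum>A\<leftarrow>splits Q 5 a. phiv Phi (delta (A!0)) (S (A!2)) (delta (A!4)) * beta (A!1) * alpha (A!3)) = eps a \<and>
       (\<Sum>A\<leftarrow>splits Q 5 a. phiv Phiinv (S (A!0)) (delta (A!2)) (S (A!4)) * alpha (A!1) * beta (A!3)) = eps a) \<and>
    \<comment> \<open>gradedness\<close>
    (\<forall>a b. is_path Q a \<longrightarrow> is_path Q b \<longrightarrow> (\<forall>p\<in>supp (M a b). plen p = plen a + plen b)) \<and>
    (\<forall>p\<in>supp u. plen p = 0) \<and>
    (\<forall>a. is_path Q a \<longrightarrow> (\<forall>p\<in>supp (S a). plen p = plen a)) \<and>
    (\<forall>a b c. 0 < plen a + plen b + plen c \<longrightarrow> Phi a b c = 0) \<and>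
    (\<forall>a. 0 < plen a \<longrightarrow> alpha a = 0 \<and> beta a = 0)"

text \<open>product of vertices g h = M(g \<otimes> h) (meaningful once M(Q_0 \<otimes> Q_0) \<subseteq> Q_0)\<close>
definition vmul :: "(('v,'a) path \<Rightarrow> ('v,'a) path \<Rightarrow> ('v,'a,'k::{zero,one}) vec) \<Rightarrow> 'v \<Rightarrow> 'v \<Rightarrow> 'v" where
  "vmul M g h = (THE x. M (g, []) (h, []) = delta (x, []))"

definition one_v :: "('v,'a,'k::{zero,one}) vec \<Rightarrow> 'v" where
  "one_v u = (THE e. u = delta (e, []))"

definition Vgroup :: "(('v,'a) path \<Rightarrow> ('v,'a) path \<Rightarrow> ('v,'a,'k::{zero,one}) vec) \<Rightarrow> ('v,'a,'k) vec \<Rightarrow> 'v monoid" where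
  "Vgroup M u = \<lparr>carrier = UNIV, mult = vmul M, one = one_v u\<rparr>"

definition arrspan :: "('v,'a,'b) quiver_scheme \<Rightarrow> 'v \<Rightarrow> 'v \<Rightarrow> ('v,'a,'k::zero) vec set" where
  "arrspan Q g h = {x. finite (supp x) \<and>
      (\<forall>p\<in>supp x. \<exists>a\<in>arr Q. src Q a = h \<and> tgt Q a = g \<and> p = (h, [a]))}"

definition lact :: "(('v,'a) path \<Rightarrow> ('v,'a) path \<Rightarrow> ('v,'a,'k::comm_ring_1) vec) \<Rightarrow> 'v \<Rightarrow> ('v,'a,'k) vec \<Rightarrow> ('v,'a,'k) vec" where
  "lact M f m = vmult M (delta (f, [])) m"

definition ract :: "(('v,'a) path \<Rightarrow> ('v,'a) path \<Rightarrow> ('v,'a,'k::comm_ring_1) vec) \<Rightarrow> ('v,'a,'k) vec \<Rightarrow> 'v \<Rightarrow> ('v,'a,'k) vec" where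
  "ract M m f = vmult M m (delta (f, []))"

definition arrows_between :: "('v,'a,'b) quiver_scheme \<Rightarrow> 'v \<Rightarrow> 'v \<Rightarrow> 'a set" where
  "arrows_between Q x y = {a\<in>arr Q. src Q a = x \<and> tgt Q a = y}"

end

theory Submission
  imports Defs "HOL-Library.Function_Algebras" "HOL.Vector_Spaces"
begin

text \<open>
  The product of two
  vertices, the unit and the antipode of a vertex are group-like elements of degree 0 of
  the path coalgebra, hence single vertices.  On vertices, axiom (i) says that the product
  is associative up to the nonzero scalar \<Phi>(f,g,h), and axioms (ii) and (v) give the unit
  and the inverse S(g); so Q_0 is a group.  The product of a vertex and an arrow h \<rightarrow> g
  is skew-primitive of degree 1, hence lies in the span of the arrows between the
  translated vertices; axiom (i) with one arrow argument, extended by linearity, gives the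
  three quasi-associativity relations.  Consequently translation by f is invertible up to
  nonzero scalars, i.e. a linear isomorphism {}^gM^h \<cong> {}^{fg}M^{fh}, and a linear
  isomorphism between free vector spaces forces their bases to be equipotent.
\<close>

subsection \<open>Finitely supported vectors and maps linear on them\<close>

definition free_on :: "('v,'a) path set \<Rightarrow> ('v,'a,'k::field) vec set" where
  "free_on E = {x. finite (supp x) \<and> supp x \<subseteq> E}"

text \<open>Linearity of a map, required only on the free space over E (the bilinear
  extension vmult is only well behaved on finitely supported arguments).\<close>
definition linear_on :: "('v,'a) path set \<Rightarrow> (('v,'a,'k::field) vec \<Rightarrow> ('v,'a,'k) vec) \<Rightarrow> bool" where
  "linear_on E T \<longleftrightarrow> (\<forall>x\<in>free_on E. \<forall>y\<in>free_on E. T (x + y) = T x + T y) \<and>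
                      (\<forall>c. \<forall>x\<in>free_on E. T (scal c x) = scal c (T x))"

lemma sum_fun_apply: "(\<Sum>i\<in>I. f i) r = (\<Sum>i\<in>I. f i r)"
  by (induction I rule: infinite_finite_induct) auto

lemma scal_vector_space: "vector_space (scal :: 'k::field \<Rightarrow> ('v,'a,'k) vec \<Rightarrow> _)"
  by unfold_locales (auto simp: scal_def fun_eq_iff algebra_simps)

lemma supp_add: "supp (x + y :: ('v,'a,'k::field) vec) \<subseteq> supp x \<union> supp y"
  by (auto simp: supp_def)

lemma supp_scal: "supp (scal c x :: ('v,'a,'k::field) vec) \<subseteq> supp x"
  by (auto simp: supp_def scal_def)

lemma supp_delta [simp]: "supp (delta p :: ('v,'a,'k::zero_neq_one) vec) = {p}"
  by (auto simp: supp_def delta_def)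

lemma supp_sum: "supp (\<Sum>i\<in>I. f i :: ('v,'a,'k::field) vec) \<subseteq> (\<Union>i\<in>I. supp (f i))"
  by (auto simp: supp_def sum_fun_apply intro: ccontr dest!: sum.neutral)

lemma delta_same [simp]: "delta p p = 1"
  by (simp add: delta_def)

lemma delta_inj: "(delta p :: ('v,'a,'k::zero_neq_one) vec) = delta q \<Longrightarrow> p = q"
  unfolding delta_def by (metis one_neq_zero)

lemma scal_zero [simp]: "scal 0 x = (0 :: ('v,'a,'k::field) vec)"
  by (auto simp: scal_def)

lemma scal_one [simp]: "scal 1 x = (x :: ('v,'a,'k::field) vec)"
  by (simp add: fun_eq_iff scal_def)

lemma scal_scal: "scal a (scal b x) = scal (a * b) (x :: ('v,'a,'k::field) vec)"
  by (simp add: fun_eq_iff scal_def mult.assoc)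

lemma scal_sum: "scal c (sum f I) = (\<Sum>i\<in>I. scal c (f i :: ('v,'a,'k::field) vec))"
  by (simp add: fun_eq_iff sum_fun_apply scal_def sum_distrib_left)

lemma scal_cancel: "c \<noteq> 0 \<Longrightarrow> scal c x = scal c y \<Longrightarrow> x = (y :: ('v,'a,'k::field) vec)"
  by (simp add: fun_eq_iff scal_def)

lemma free_on_zero: "(0 :: ('v,'a,'k::field) vec) \<in> free_on E"
  by (simp add: free_on_def supp_def)

lemma free_on_add: "(x :: ('v,'a,'k::field) vec) \<in> free_on E \<Longrightarrow> y \<in> free_on E \<Longrightarrow> x + y \<in> free_on E"
  unfolding free_on_def using supp_add[of x y] by (auto intro: finite_subset)

lemma free_on_scal: "(x :: ('v,'a,'k::field) vec) \<in> free_on E \<Longrightarrow> scal c x \<in> free_on E"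
  unfolding free_on_def using supp_scal[of c x] by (auto intro: finite_subset)

lemma free_on_delta: "p \<in> E \<Longrightarrow> (delta p :: ('v,'a,'k::field) vec) \<in> free_on E"
  by (simp add: free_on_def)

lemma free_on_sum: "(\<And>i. i \<in> I \<Longrightarrow> f i \<in> free_on E) \<Longrightarrow> sum f I \<in> free_on E"
  by (induction I rule: infinite_finite_induct) (auto intro: free_on_add free_on_zero)

lemma basis_expansion:
  "finite (supp x) \<Longrightarrow> x = (\<Sum>p\<in>supp x. scal (x p) (delta p :: ('v,'a,'k::field) vec))"
  by (rule ext) (auto simp: sum_fun_apply scal_def delta_def supp_def if_distrib cong: if_cong)

lemma linear_on_zero: "linear_on E T \<Longrightarrow> T 0 = (0 :: ('v,'a,'k::field) vec)"
  using free_on_zero[of E] unfolding linear_on_def by (metis scal_zero)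

lemma linear_on_sum:
  assumes "linear_on E T" "\<And>i. i \<in> I \<Longrightarrow> f i \<in> free_on E"
  shows "T (sum f I) = (\<Sum>i\<in>I. T (f i))"
  using assms(2)
proof (induction I rule: infinite_finite_induct)
  case (insert i I)
  have IH: "T (sum f I) = (\<Sum>i\<in>I. T (f i))"
    using insert.IH insert.prems by blast
  have "T (sum f (insert i I)) = T (f i + sum f I)"
    using insert.hyps by simp
  also have "\<dots> = T (f i) + T (sum f I)"
    using assms(1) insert.prems free_on_sum[of I f E] unfolding linear_on_def by blast
  also have "\<dots> = T (f i) + (\<Sum>i\<in>I. T (f i))"
    by (simp only: IH)
  also have "\<dots> = (\<Sum>i\<in>insert i I. T (f i))"
    by (rule sum.insert[OF insert.hyps, symmetric])
  finally show ?case .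
qed (use linear_on_zero[OF assms(1)] in auto)

lemma linear_on_expansion:
  assumes "linear_on E T" "x \<in> free_on E"
  shows "T x = (\<Sum>p\<in>supp x. scal (x p) (T (delta p)))"
proof -
  have E: "delta p \<in> free_on E" if "p \<in> supp x" for p
    using assms(2) that by (intro free_on_delta) (auto simp: free_on_def)
  have "T x = T (\<Sum>p\<in>supp x. scal (x p) (delta p))"
    using assms(2) basis_expansion[of x] by (simp add: free_on_def)
  also have "\<dots> = (\<Sum>p\<in>supp x. T (scal (x p) (delta p)))"
    by (intro linear_on_sum[OF assms(1)] free_on_scal E)
  also have "\<dots> = (\<Sum>p\<in>supp x. scal (x p) (T (delta p)))"
  proof (intro sum.cong refl)
    fix p assume "p \<in> supp x"
    then show "T (scal (x p) (delta p)) = scal (x p) (T (delta p))"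
      using assms(1) E unfolding linear_on_def by blast
  qed
  finally show ?thesis .
qed

lemma linear_on_id: "linear_on E (\<lambda>x. x)"
  by (simp add: linear_on_def)

lemma linear_on_agree:
  assumes l1: "linear_on E F" and l2: "linear_on E G"
    and basis: "\<And>p. p \<in> E \<Longrightarrow> F (delta p) = scal c (G (delta p))"
    and x: "x \<in> free_on E"
  shows "F x = scal c (G x)"
proof -
  have "F x = (\<Sum>p\<in>supp x. scal (x p) (F (delta p)))" by (rule linear_on_expansion[OF l1 x])
  also have "\<dots> = (\<Sum>p\<in>supp x. scal c (scal (x p) (G (delta p))))"
    using basis x by (intro sum.cong refl) (auto simp: free_on_def scal_scal mult.commute)
  also have "\<dots> = scal c (G x)" by (simp add: linear_on_expansion[OF l2 x] scal_sum)
  finally show ?thesis .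
qed

lemma linear_on_comp:
  assumes "linear_on E2 T1" "linear_on E1 T2" "T2 ` free_on E1 \<subseteq> free_on E2"
  shows "linear_on E1 (\<lambda>x. T1 (T2 x))"
  using assms free_on_add free_on_scal unfolding linear_on_def image_subset_iff by simp

lemma linear_on_inverse:
  fixes T :: "('v,'a,'k::field) vec \<Rightarrow> ('v,'a,'k) vec"
  assumes bij: "bij_betw T (free_on E1) (free_on E2)" and lin: "linear_on E1 T"
  shows "linear_on E2 (the_inv_into (free_on E1) T)"
proof -
  let ?S = "the_inv_into (free_on E1) T"
  have inj: "inj_on T (free_on E1)" using bij by (simp add: bij_betw_def)
  have S: "?S y \<in> free_on E1" "T (?S y) = y" if "y \<in> free_on E2" for y
    using that bij_betw_the_inv_into[OF bij] f_the_inv_into_f_bij_betw[OF bij]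
    by (auto simp: bij_betw_def)
  show ?thesis unfolding linear_on_def
  proof (intro conjI ballI allI)
    fix x y :: "('v,'a,'k) vec" assume xy: "x \<in> free_on E2" "y \<in> free_on E2"
    have "T (?S x + ?S y) = x + y"
      using lin S xy unfolding linear_on_def by metis
    then show "?S (x + y) = ?S x + ?S y"
      by (rule the_inv_into_f_eq[OF inj _ free_on_add[OF S(1)[OF xy(1)] S(1)[OF xy(2)]]])
  next
    fix c :: 'k and x :: "('v,'a,'k) vec" assume x: "x \<in> free_on E2"
    have "T (scal c (?S x)) = scal c x"
      using lin S x unfolding linear_on_def by metis
    then show "?S (scal c x) = scal c (?S x)"
      by (rule the_inv_into_f_eq[OF inj _ free_on_scal[OF S(1)[OF x]]])
  qed
qed

lemma bij_betw_if_inverse_up_to_scalars: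
  fixes T R :: "('v,'a,'k::field) vec \<Rightarrow> ('v,'a,'k) vec"
  assumes T: "T ` free_on E1 \<subseteq> free_on E2" and R: "R ` free_on E2 \<subseteq> free_on E1"
    and lin: "linear_on E1 T"
    and RT: "\<And>x. x \<in> free_on E1 \<Longrightarrow> R (T x) = scal c x"
    and TR: "\<And>y. y \<in> free_on E2 \<Longrightarrow> T (R y) = scal d y"
    and "c \<noteq> 0" "d \<noteq> 0"
  shows "bij_betw T (free_on E1) (free_on E2)"
proof (rule bij_betw_imageI)
  show "inj_on T (free_on E1)"
    using RT scal_cancel[OF \<open>c \<noteq> 0\<close>] by (metis inj_onI)
  show "T ` free_on E1 = free_on E2"
  proof (rule subset_antisym[OF T], rule subsetI)
    fix y :: "('v,'a,'k) vec" assume y: "y \<in> free_on E2"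
    then have Ry: "R y \<in> free_on E1" using R by blast
    have "T (scal (1/d) (R y)) = y"
      using lin Ry TR[OF y] \<open>d \<noteq> 0\<close> by (simp add: linear_on_def scal_scal)
    then show "y \<in> T ` free_on E1" using free_on_scal[OF Ry, of "1/d"] by (metis image_eqI)
  qed
qed

subsection \<open>Linear isomorphisms of free spaces preserve the size of the basis\<close>

lemma linear_bij_basis_cover:
  fixes T :: "('v,'a,'k::field) vec \<Rightarrow> ('v,'a,'k) vec"
  assumes bij: "bij_betw T (free_on E1) (free_on E2)" and lin: "linear_on E1 T"
  shows "E2 \<subseteq> (\<Union>p\<in>E1. supp (T (delta p)))"
proof
  fix q assume "q \<in> E2"
  then obtain m where m: "m \<in> free_on E1" "T m = delta q"
    using bij free_on_delta unfolding bij_betw_def by (metis imageE)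
  have "q \<in> supp (T m)" using m by simp
  also have "T m = (\<Sum>p\<in>supp m. scal (m p) (T (delta p)))" by (rule linear_on_expansion[OF lin m(1)])
  also have "supp \<dots> \<subseteq> (\<Union>p\<in>supp m. supp (scal (m p) (T (delta p))))" by (rule supp_sum)
  also have "\<dots> \<subseteq> (\<Union>p\<in>E1. supp (T (delta p)))"
    using m(1) supp_scal unfolding free_on_def by blast
  finally show "q \<in> (\<Union>p\<in>E1. supp (T (delta p)))" .
qed

text \<open>Finite-dimensional case: the images of the source basis are linearly independent
  and lie in the span of the target basis, so the source basis is not larger.\<close>
lemma linear_bij_finite_card_le:
  fixes T :: "('v,'a,'k::field) vec \<Rightarrow> ('v,'a,'k) vec"
  assumes bij: "bij_betw T (free_on E1) (free_on E2)" and lin: "linear_on E1 T" and fin: "finite E2"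
  shows "finite E1 \<and> card E1 \<le> card E2"
proof -
  interpret V: vector_space "scal :: 'k \<Rightarrow> ('v,'a,'k) vec \<Rightarrow> _" by (rule scal_vector_space)
  let ?D = "(\<lambda>p. T (delta p)) ` E1"
  have inj: "inj_on (\<lambda>p. T (delta p)) E1"
  proof (rule inj_onI)
    fix p q assume "p \<in> E1" "q \<in> E1" "T (delta p) = T (delta q)"
    then have "delta p = (delta q :: ('v,'a,'k) vec)"
      using bij free_on_delta unfolding bij_betw_def inj_on_def by metis
    then show "p = q" by (rule delta_inj)
  qed
  have span: "?D \<subseteq> V.span (delta ` E2)"
  proof
    fix y assume "y \<in> ?D"
    then have y: "y \<in> free_on E2" using bij free_on_delta unfolding bij_betw_def by blast
    then have "y = (\<Sum>p\<in>supp y. scal (y p) (delta p))" using basis_expansion by (auto simp: free_on_def)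
    also have "\<dots> \<in> V.span (delta ` E2)"
      using y unfolding free_on_def by (intro V.span_sum V.span_scale V.span_base) auto
    finally show "y \<in> V.span (delta ` E2)" .
  qed
  have indep: "V.independent ?D"
    unfolding V.independent_explicit_finite_subsets
  proof (intro allI impI ballI)
    fix D c v assume D: "D \<subseteq> ?D" "finite D" and comb: "(\<Sum>v\<in>D. scal (c v) v) = 0" and v: "v \<in> D"
    define E where "E = {p\<in>E1. T (delta p) \<in> D}"
    have DE: "D = (\<lambda>p. T (delta p)) ` E" using D unfolding E_def by auto
    have injE: "inj_on (\<lambda>p. T (delta p)) E" using inj unfolding E_def by (auto intro: inj_on_subset)
    have finE: "finite E" using D(2) DE injE finite_imageD by metis
    have E1: "E \<subseteq> E1" unfolding E_def by auto
    define w where "w = (\<Sum>p\<in>E. scal (c (T (delta p))) (delta p :: ('v,'a,'k) vec))"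
    have w: "w \<in> free_on E1" unfolding w_def using E1 by (auto intro!: free_on_sum free_on_scal free_on_delta)
    have "T w = (\<Sum>p\<in>E. T (scal (c (T (delta p))) (delta p)))"
      unfolding w_def using E1 by (intro linear_on_sum[OF lin]) (auto intro!: free_on_scal free_on_delta)
    also have "\<dots> = (\<Sum>p\<in>E. scal (c (T (delta p))) (T (delta p)))"
    proof (intro sum.cong refl)
      fix p assume "p \<in> E"
      then have "delta p \<in> free_on E1" using E1 by (intro free_on_delta) auto
      then show "T (scal (c (T (delta p))) (delta p)) = scal (c (T (delta p))) (T (delta p))"
        using lin unfolding linear_on_def by blast
    qed
    also have "\<dots> = (\<Sum>v\<in>D. scal (c v) v)" unfolding DE by (rule sum.reindex[OF injE, symmetric, unfolded comp_def])
    also have "\<dots> = T 0" using comb linear_on_zero[OF lin] by simp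
    finally have "w = 0" using bij w free_on_zero unfolding bij_betw_def inj_on_def by blast
    obtain p where p: "p \<in> E" "v = T (delta p)" using v DE by auto
    have "w p = c v"
      unfolding w_def using p finE
      by (simp add: sum_fun_apply scal_def delta_def if_distrib cong: if_cong)
    then show "c v = 0" using \<open>w = 0\<close> by simp
  qed
  have "finite ?D \<and> card ?D \<le> card ((delta :: _ \<Rightarrow> ('v,'a,'k) vec) ` E2)"
    using V.independent_span_bound[OF _ indep span] fin by auto
  moreover have "card ((delta :: _ \<Rightarrow> ('v,'a,'k) vec) ` E2) \<le> card E2" using fin by (rule card_image_le)
  ultimately show ?thesis using inj card_image[OF inj] finite_imageD[OF _ inj] by linarith
qed

unbundle cardinal_syntax

lemma card_of_le_UNION_finite:
  assumes cover: "B \<subseteq> (\<Union>a\<in>A. F a)" and fin: "\<And>a. a \<in> A \<Longrightarrow> finite (F a)" and inf: "infinite A"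
  shows "|B| \<le>o |A|"
proof -
  have "|F a| \<le>o |A|" if "a \<in> A" for a
    using finite_ordLess_infinite[OF card_of_Well_order card_of_Well_order] fin[OF that] inf
    unfolding Field_card_of by (blast intro: ordLess_imp_ordLeq)
  then have "|\<Union>a\<in>A. F a| \<le>o |A|"
    by (intro card_of_UNION_ordLeq_infinite[OF inf] ordLeq_refl[OF card_of_Card_order]) blast
  then show ?thesis using card_of_mono1[OF cover] ordLeq_transitive by blast
qed

lemma linear_bij_equipotent:
  fixes T :: "('v,'a,'k::field) vec \<Rightarrow> ('v,'a,'k) vec"
  assumes bij: "bij_betw T (free_on E1) (free_on E2)" and lin: "linear_on E1 T"
  shows "\<exists>\<phi>. bij_betw \<phi> E1 E2"
proof -
  let ?S = "the_inv_into (free_on E1) T"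
  have bijS: "bij_betw ?S (free_on E2) (free_on E1)" using bij by (rule bij_betw_the_inv_into)
  have linS: "linear_on E2 ?S" using bij lin by (rule linear_on_inverse)
  have cover1: "E2 \<subseteq> (\<Union>p\<in>E1. supp (T (delta p)))" using bij lin by (rule linear_bij_basis_cover)
  have cover2: "E1 \<subseteq> (\<Union>p\<in>E2. supp (?S (delta p)))" using bijS linS by (rule linear_bij_basis_cover)
  have fin1: "finite (supp (T (delta p)))" if "p \<in> E1" for p
    using bij free_on_delta[OF that] unfolding bij_betw_def free_on_def by blast
  have fin2: "finite (supp (?S (delta p)))" if "p \<in> E2" for p
    using bijS free_on_delta[OF that] unfolding bij_betw_def free_on_def by blast
  show ?thesis
  proof (cases "finite E1")
    case True
    then have "finite E2" using fin1 by (intro finite_subset[OF cover1]) auto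
    then have "card E1 = card E2"
      using linear_bij_finite_card_le[OF bij lin] linear_bij_finite_card_le[OF bijS linS] True by auto
    then show ?thesis using True \<open>finite E2\<close> finite_same_card_bij by blast
  next
    case False
    then have "infinite E2" using fin2 finite_subset[OF cover2] by blast
    then have "|E1| =o |E2|"
      using card_of_le_UNION_finite[OF cover1 fin1 False] card_of_le_UNION_finite[OF cover2 fin2]
      by (simp add: ordIso_iff_ordLeq)
    then show ?thesis by (simp only: card_of_ordIso)
  qed
qed

subsection \<open>Coproducts of vertices and arrows in the path coalgebra\<close>

declare splits.simps(3) [simp del]

lemma splits_vertex:
  fixes Q :: "('v,'a,'b) quiver_scheme" and g :: 'v
  shows "splits Q (Suc n) (g,[]) = [replicate (Suc n) (g,[])]"
proof (induction n)
  case (Suc n)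
  have "plen (g,[]::'a list) = 0" "psuffix Q 0 (g,[]::'a list) = (g,[])" "pprefix 0 (g,[]::'a list) = (g,[])"
    by (simp_all add: plen_def pprefix_def psuffix_def ptgt_def)
  then show ?case by (simp add: splits.simps(3) Suc.IH replicate_append_same)
qed simp

lemma splits2_vertex: "splits Q 2 (g,[]) = [[(g,[]),(g,[])]]"
  by (simp add: numeral_2_eq_2 splits_vertex)

lemma splits3_vertex: "splits Q 3 (g,[]) = [[(g,[]),(g,[]),(g,[])]]"
  by (simp add: numeral_3_eq_3 splits_vertex)

lemma splits5_vertex: "splits Q 5 (g,[]) = [[(g,[]),(g,[]),(g,[]),(g,[]),(g,[])]]"
  by (simp add: eval_nat_numeral splits_vertex)

lemma splits2_arrow: "splits Q 2 (h,[a]) = [[(h,[a]),(h,[])], [(tgt Q a,[]),(h,[a])]]"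
  by (simp add: numeral_2_eq_2 splits.simps(3) plen_def pprefix_def psuffix_def ptgt_def upt_rec)

lemma is_path_vertex [simp]: "is_path Q (g,[])"
  by (simp add: is_path_def)

lemma grouplike_is_vertex:
  fixes x :: "('v,'a,'k::field) vec"
  assumes fin: "finite (supp x)" and comul: "\<forall>l r. comul Q x (l,r) = x l * x r"
    and counit: "epsv x = 1" and deg: "\<forall>p\<in>supp x. plen p = 0"
  shows "x = delta (THE v. x = delta (v,[]), [])"
proof -
  have vertex: "p = (fst p, [])" if "p \<in> supp x" for p
    using deg that by (cases p) (auto simp: plen_def)
  have one: "x p = 1" if p: "p \<in> supp x" for p
  proof -
    have "x p * x p = x p" using comul[rule_format, of p p] vertex[OF p]
      by (metis comul_def fst_conv ptgt_def snd_conv append_Nil)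
    then show ?thesis using p by (simp add: supp_def)
  qed
  have unique: "p = q" if p: "p \<in> supp x" and q: "q \<in> supp x" for p q
  proof (rule ccontr)
    assume "p \<noteq> q"
    moreover obtain v w where "p = (v,[])" "q = (w,[])" using vertex[OF p] vertex[OF q] by blast
    ultimately have "comul Q x (p,q) = 0" by (simp add: comul_def ptgt_def)
    then show False using comul one[OF p] one[OF q] by simp
  qed
  have "supp x \<noteq> {}" using counit by (auto simp: epsv_def)
  then obtain p where p: "p \<in> supp x" by blast
  have "x = delta (fst p, [])"
  proof
    fix r show "x r = delta (fst p, []) r"
    proof (cases "r \<in> supp x")
      case True
      then show ?thesis using one[OF p] vertex[OF p] unique[OF _ p] by (simp add: delta_def)
    next
      case False
      then show ?thesis using p vertex[OF p] by (auto simp: delta_def supp_def)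
    qed
  qed
  moreover have "(THE v. x = delta (v,[])) = fst p"
  proof (rule the_equality)
    fix v assume "x = delta (v,[])"
    then have "(delta (v,[]) :: ('v,'a,'k) vec) = delta (fst p, [])"
      using \<open>x = delta (fst p, [])\<close> by simp
    then have "(v,[]) = (fst p, [] :: 'a list)" by (rule delta_inj)
    then show "v = fst p" by simp
  qed fact
  ultimately show ?thesis by simp
qed

lemma skew_primitive_in_arrspan:
  fixes x :: "('v,'a,'k::field) vec"
  assumes kq: "x \<in> kQ Q"
    and comul: "\<forall>l r. comul Q x (l,r) = x l * delta (s,[]) r + delta (t,[]) l * x r"
    and deg: "\<forall>p\<in>supp x. plen p = 1"
  shows "x \<in> arrspan Q t s"
  unfolding arrspan_def
proof (intro CollectI conjI ballI)
  show "finite (supp x)" using kq by (simp add: kQ_def)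
  fix p assume p: "p \<in> supp x"
  obtain v b where pe: "p = (v,[b])" using deg p by (cases p) (auto simp: plen_def length_Suc_conv)
  have b: "b \<in> arr Q" "src Q b = v" using kq p pe by (auto simp: kQ_def is_path_def)
  have nz: "x p \<noteq> 0" using p by (simp add: supp_def)
  have "x p = x p * delta (s,[]) (v,[])"
    using comul[rule_format, of "(v,[b])" "(v,[])"] pe by (simp add: comul_def ptgt_def delta_def)
  then have "v = s" using nz by (auto simp: delta_def split: if_splits)
  moreover have "x p = delta (t,[]) (tgt Q b,[]) * x p"
    using comul[rule_format, of "(tgt Q b,[])" "(v,[b])"] pe by (simp add: comul_def ptgt_def delta_def)
  then have "tgt Q b = t" using nz by (auto simp: delta_def split: if_splits)
  ultimately show "\<exists>a\<in>arr Q. src Q a = s \<and> tgt Q a = t \<and> p = (s, [a])" using b pe by blast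
qed

definition pairing :: "('x \<Rightarrow> 'k::comm_ring_1) \<Rightarrow> ('x \<Rightarrow> 'k) \<Rightarrow> 'k" where
  "pairing F y = (\<Sum>q\<in>supp y. y q * F q)"

lemma pairing_superset: "finite U \<Longrightarrow> supp y \<subseteq> U \<Longrightarrow> pairing F y = (\<Sum>q\<in>U. y q * F q)"
  unfolding pairing_def by (rule sum.mono_neutral_left) (auto simp: supp_def)

lemma pairing_add:
  fixes x y :: "('v,'a,'k::field) vec"
  assumes "finite (supp x)" "finite (supp y)"
  shows "pairing F (x + y) = pairing F x + pairing F y"
proof -
  let ?U = "supp x \<union> supp y"
  have "pairing F (x + y) = (\<Sum>q\<in>?U. (x + y) q * F q)"
    using assms supp_add[of x y] by (intro pairing_superset) auto
  also have "\<dots> = (\<Sum>q\<in>?U. x q * F q) + (\<Sum>q\<in>?U. y q * F q)"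
    by (simp add: distrib_right sum.distrib)
  also have "\<dots> = pairing F x + pairing F y"
    using assms by (simp add: pairing_superset[of ?U x F] pairing_superset[of ?U y F])
  finally show ?thesis .
qed

lemma pairing_scal:
  fixes x :: "('v,'a,'k::field) vec"
  assumes "finite (supp x)"
  shows "pairing F (scal c x) = c * pairing F x"
proof -
  have "pairing F (scal c x) = (\<Sum>q\<in>supp x. scal c x q * F q)"
    using assms supp_scal[of c x] by (intro pairing_superset) auto
  also have "\<dots> = c * pairing F x" by (simp add: pairing_def scal_def sum_distrib_left mult.assoc)
  finally show ?thesis .
qed

lemma linear_on_pairing: "linear_on E (\<lambda>y r. pairing (F r) y)"
  unfolding linear_on_def free_on_def
  by (auto simp: fun_eq_iff pairing_add pairing_scal[unfolded scal_def] scal_def)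

lemma lact_pairing: "lact M f x = (\<lambda>r. pairing (\<lambda>q. M (f,[]) q r) x)"
  by (simp add: lact_def vmult_def pairing_def fun_eq_iff)

lemma ract_pairing: "ract M x f = (\<lambda>r. pairing (\<lambda>q. M q (f,[]) r) x)"
  by (simp add: ract_def vmult_def pairing_def fun_eq_iff)

lemma linear_on_lact: "linear_on E (lact M f)"
  unfolding lact_pairing by (rule linear_on_pairing)

lemma linear_on_ract: "linear_on E (\<lambda>x. ract M x f)"
  unfolding ract_pairing by (rule linear_on_pairing)

lemma vmult_delta: "vmult M (delta p) (delta q :: ('v,'a,'k::field) vec) = M p q"
  by (simp add: vmult_def fun_eq_iff)

lemma lact_delta: "lact M f (delta p :: ('v,'a,'k::field) vec) = M (f,[]) p"
  by (simp add: lact_def vmult_delta)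

lemma ract_delta: "ract M (delta p :: ('v,'a,'k::field) vec) f = M p (f,[])"
  by (simp add: ract_def vmult_delta)

definition arrow_paths :: "('v,'a,'b) quiver_scheme \<Rightarrow> 'v \<Rightarrow> 'v \<Rightarrow> ('v,'a) path set" where
  "arrow_paths Q g h = {p. \<exists>a\<in>arr Q. src Q a = h \<and> tgt Q a = g \<and> p = (h,[a])}"

lemma arrspan_free_on: "arrspan Q g h = free_on (arrow_paths Q g h)"
  by (auto simp: arrspan_def free_on_def arrow_paths_def)

lemma arrow_pathsE:
  assumes "p \<in> arrow_paths Q g h"
  obtains a where "a \<in> arr Q" "src Q a = h" "tgt Q a = g" "p = (h,[a])"
  using assms unfolding arrow_paths_def by blast

lemma arrow_paths_is_path: "p \<in> arrow_paths Q g h \<Longrightarrow> is_path Q p"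
  by (auto simp: arrow_paths_def is_path_def)

lemma arrows_between_arrow_paths: "bij_betw (\<lambda>a. (h,[a])) (arrows_between Q h g) (arrow_paths Q g h)"
  by (auto simp: bij_betw_def inj_on_def arrow_paths_def arrows_between_def)

lemma arrows_between_equipotent:
  fixes T :: "('v,'a,'k::field) vec \<Rightarrow> ('v,'a,'k) vec"
  assumes "bij_betw T (arrspan Q g h) (arrspan Q g' h')" "linear_on (arrow_paths Q g h) T"
  shows "\<exists>\<phi>. bij_betw \<phi> (arrows_between Q h g) (arrows_between Q h' g')"
proof -
  obtain \<psi> where \<psi>: "bij_betw \<psi> (arrow_paths Q g h) (arrow_paths Q g' h')"
    using linear_bij_equipotent assms unfolding arrspan_free_on by blast
  have "bij_betw (\<psi> \<circ> (\<lambda>a. (h,[a]))) (arrows_between Q h g) (arrow_paths Q g' h')"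
    using arrows_between_arrow_paths \<psi> by (rule bij_betw_trans)
  then have "bij_betw (inv_into (arrows_between Q h' g') (\<lambda>a. (h',[a])) \<circ> (\<psi> \<circ> (\<lambda>a. (h,[a]))))
     (arrows_between Q h g) (arrows_between Q h' g')"
    using bij_betw_inv_into[OF arrows_between_arrow_paths] by (rule bij_betw_trans)
  then show ?thesis by blast
qed

subsection \<open>The axioms of a graded Majid algebra on kQ\<close>

text \<open>The vertex that the antipode assigns to a vertex (meaningful once S(Q_0) \<subseteq> Q_0).\<close>
definition vinv :: "(('v,'a) path \<Rightarrow> ('v,'a,'k::{zero,one}) vec) \<Rightarrow> 'v \<Rightarrow> 'v" where
  "vinv S g = (THE x. S (g,[]) = delta (x,[]))"

locale graded_majid_kQ =
  fixes Q :: "('v,'a,'b) quiver_scheme"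
    and M :: "('v,'a) path \<Rightarrow> ('v,'a) path \<Rightarrow> ('v,'a,'k::field) vec"
    and u :: "('v,'a,'k) vec"
    and Phi Phiinv :: "('v,'a) path \<Rightarrow> ('v,'a) path \<Rightarrow> ('v,'a) path \<Rightarrow> 'k"
    and S :: "('v,'a) path \<Rightarrow> ('v,'a,'k) vec"
    and alpha beta :: "('v,'a) path \<Rightarrow> 'k"
  assumes graded_majid: "graded_majid Q M u Phi Phiinv S alpha beta"
begin

lemmas majid_axioms = graded_majid[unfolded graded_majid_def]

lemma unit_kQ: "u \<in> kQ Q"
  using majid_axioms by (elim conjE) assumption

lemma M_kQ [rule_format]: "\<forall>a b. is_path Q a \<longrightarrow> is_path Q b \<longrightarrow> M a b \<in> kQ Q"
  using majid_axioms by (elim conjE) assumption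

lemma S_kQ [rule_format]: "\<forall>a. is_path Q a \<longrightarrow> S a \<in> kQ Q"
  using majid_axioms by (elim conjE) assumption

lemma M_coalgebra_map [rule_format]: "\<forall>a b. is_path Q a \<longrightarrow> is_path Q b \<longrightarrow>
    (\<forall>l r. comul Q (M a b) (l, r) =
       (\<Sum>A\<leftarrow>splits Q 2 a. \<Sum>B\<leftarrow>splits Q 2 b. M (A!0) (B!0) l * M (A!1) (B!1) r)) \<and>
    epsv (M a b) = eps a * eps b"
  using majid_axioms by (elim conjE) assumption

lemmas M_comul = M_coalgebra_map[THEN conjunct1, rule_format]
lemmas M_counit = M_coalgebra_map[THEN conjunct2]

lemma unit_comul [rule_format]: "\<forall>l r. comul Q u (l, r) = u l * u r"
  using majid_axioms by (elim conjE) assumption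

lemma unit_counit: "epsv u = 1"
  using majid_axioms by (elim conjE) assumption

lemma S_coalgebra_antimap [rule_format]: "\<forall>a. is_path Q a \<longrightarrow>
    (\<forall>l r. comul Q (S a) (l, r) = (\<Sum>A\<leftarrow>splits Q 2 a. S (A!1) l * S (A!0) r)) \<and>
    epsv (S a) = eps a"
  using majid_axioms by (elim conjE) assumption

lemmas S_comul = S_coalgebra_antimap[THEN conjunct1, rule_format]
lemmas S_counit = S_coalgebra_antimap[THEN conjunct2]

lemma Phi_convolution_invertible [rule_format]:
  "\<forall>a b c. is_path Q a \<longrightarrow> is_path Q b \<longrightarrow> is_path Q c \<longrightarrow>
    (\<Sum>A\<leftarrow>splits Q 2 a. \<Sum>B\<leftarrow>splits Q 2 b. \<Sum>C\<leftarrow>splits Q 2 c.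
       Phi (A!0) (B!0) (C!0) * Phiinv (A!1) (B!1) (C!1)) = eps a * eps b * eps c \<and>
    (\<Sum>A\<leftarrow>splits Q 2 a. \<Sum>B\<leftarrow>splits Q 2 b. \<Sum>C\<leftarrow>splits Q 2 c.
       Phiinv (A!0) (B!0) (C!0) * Phi (A!1) (B!1) (C!1)) = eps a * eps b * eps c"
  using majid_axioms by (elim conjE) assumption

lemma quasi_assoc [rule_format]: "\<forall>a b c. is_path Q a \<longrightarrow> is_path Q b \<longrightarrow> is_path Q c \<longrightarrow> (\<forall>r.
    (\<Sum>A\<leftarrow>splits Q 2 a. \<Sum>B\<leftarrow>splits Q 2 b. \<Sum>C\<leftarrow>splits Q 2 c.
       vmult M (delta (A!0)) (M (B!0) (C!0)) r * Phi (A!1) (B!1) (C!1)) =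
    (\<Sum>A\<leftarrow>splits Q 2 a. \<Sum>B\<leftarrow>splits Q 2 b. \<Sum>C\<leftarrow>splits Q 2 c.
       Phi (A!0) (B!0) (C!0) * vmult M (M (A!1) (B!1)) (delta (C!1)) r))"
  using majid_axioms by (elim conjE) assumption

lemma unit_law [rule_format]:
  "\<forall>a. is_path Q a \<longrightarrow> vmult M u (delta a) = delta a \<and> vmult M (delta a) u = delta a"
  using majid_axioms by (elim conjE) assumption

lemma antipode [rule_format]: "\<forall>a. is_path Q a \<longrightarrow> (\<forall>r.
    (\<Sum>A\<leftarrow>splits Q 3 a. alpha (A!1) * vmult M (S (A!0)) (delta (A!2)) r) = alpha a * u r \<and>
    (\<Sum>A\<leftarrow>splits Q 3 a. beta (A!1) * vmult M (delta (A!0)) (S (A!2)) r) = beta a * u r)"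
  using majid_axioms by (elim conjE) assumption

lemma antipode_Phi [rule_format]: "\<forall>a. is_path Q a \<longrightarrow>
    (\<Sum>A\<leftarrow>splits Q 5 a. phiv Phi (delta (A!0)) (S (A!2)) (delta (A!4)) * beta (A!1) * alpha (A!3)) = eps a \<and>
    (\<Sum>A\<leftarrow>splits Q 5 a. phiv Phiinv (S (A!0)) (delta (A!2)) (S (A!4)) * alpha (A!1) * beta (A!3)) = eps a"
  using majid_axioms by (elim conjE) assumption

lemma M_degree [rule_format]:
  "\<forall>a b. is_path Q a \<longrightarrow> is_path Q b \<longrightarrow> (\<forall>p\<in>supp (M a b). plen p = plen a + plen b)"
  using majid_axioms by (elim conjE) assumption

lemma unit_degree [rule_format]: "\<forall>p\<in>supp u. plen p = 0"
  using majid_axioms by (elim conjE) assumption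

lemma S_degree [rule_format]: "\<forall>a. is_path Q a \<longrightarrow> (\<forall>p\<in>supp (S a). plen p = plen a)"
  using majid_axioms by (elim conjE) assumption

lemma Phi_degree [rule_format]: "\<forall>a b c. 0 < plen a + plen b + plen c \<longrightarrow> Phi a b c = 0"
  using majid_axioms by (elim conjE) assumption

subsection \<open>The vertices form a group\<close>

text \<open>A product of two vertices is a vertex: it is group-like of degree 0.\<close>
lemma M_vertices: "M (g,[]) (h,[]) = delta (vmul M g h, [])"
  unfolding vmul_def
proof (rule grouplike_is_vertex)
  show "finite (supp (M (g,[]) (h,[])))" using M_kQ[of "(g,[])" "(h,[])"] by (simp add: kQ_def)
  show "\<forall>l r. comul Q (M (g,[]) (h,[])) (l,r) = M (g,[]) (h,[]) l * M (g,[]) (h,[]) r"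
    using M_comul[of "(g,[])" "(h,[])"] by (simp add: splits2_vertex)
  show "epsv (M (g,[]) (h,[])) = 1" using M_counit[of "(g,[])" "(h,[])"] by (simp add: eps_def plen_def)
  show "\<forall>p\<in>supp (M (g,[]) (h,[])). plen p = 0" using M_degree[of "(g,[])" "(h,[])"] by (simp add: plen_def)
qed

lemma unit_vertex: "u = delta (one_v u, [])"
  unfolding one_v_def
  using unit_kQ unit_comul unit_counit unit_degree by (intro grouplike_is_vertex) (auto simp: kQ_def)

lemma S_vertex: "S (g,[]) = delta (vinv S g, [])"
  unfolding vinv_def
proof (rule grouplike_is_vertex)
  show "finite (supp (S (g,[])))" using S_kQ[of "(g,[])"] by (simp add: kQ_def)
  show "\<forall>l r. comul Q (S (g,[])) (l,r) = S (g,[]) l * S (g,[]) r"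
    using S_comul[of "(g,[])"] by (simp add: splits2_vertex)
  show "epsv (S (g,[])) = 1" using S_counit[of "(g,[])"] by (simp add: eps_def plen_def)
  show "\<forall>p\<in>supp (S (g,[])). plen p = 0" using S_degree[of "(g,[])"] by (simp add: plen_def)
qed

lemma M_unit_left: "is_path Q a \<Longrightarrow> M (one_v u,[]) a = delta a"
  using unit_law[of a] unit_vertex by (metis vmult_delta)

lemma M_unit_right: "is_path Q a \<Longrightarrow> M a (one_v u,[]) = delta a"
  using unit_law[of a] unit_vertex by (metis vmult_delta)

lemma vmul_unit_left [simp]: "vmul M (one_v u) g = g"
  using M_unit_left[of "(g,[])"] M_vertices[of "one_v u" g] by (auto dest: delta_inj)

lemma vmul_unit_right [simp]: "vmul M g (one_v u) = g"
  using M_unit_right[of "(g,[])"] M_vertices[of g "one_v u"] by (auto dest: delta_inj)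

text \<open>The reassociator is invertible, hence nonzero, on triples of vertices.\<close>
lemma Phi_vertices_nonzero: "Phi (f,[]) (g,[]) (h,[]) \<noteq> 0"
  using Phi_convolution_invertible[of "(f,[])" "(g,[])" "(h,[])"]
  by (auto simp: splits2_vertex eps_def plen_def)

text \<open>On vertices, axiom (i) reads (f g) h = f (g h) up to the nonzero scalar \<Phi>(f,g,h).\<close>
lemma vmul_assoc: "vmul M (vmul M f g) h = vmul M f (vmul M g h)"
proof -
  have "vmult M (delta (f,[])) (M (g,[]) (h,[])) r * Phi (f,[]) (g,[]) (h,[]) =
        Phi (f,[]) (g,[]) (h,[]) * vmult M (M (f,[]) (g,[])) (delta (h,[])) r" for r
    using quasi_assoc[of "(f,[])" "(g,[])" "(h,[])" r] by (simp add: splits2_vertex)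
  then have "M (f,[]) (vmul M g h,[]) = M (vmul M f g,[]) (h,[])"
    using Phi_vertices_nonzero[of f g h] by (simp add: M_vertices vmult_delta fun_eq_iff)
  then have "(delta (vmul M f (vmul M g h),[]) :: ('v,'a,'k) vec) = delta (vmul M (vmul M f g) h, [])"
    by (simp add: M_vertices)
  then show ?thesis by (auto dest: delta_inj)
qed

text \<open>By axiom (vi), \<alpha> and \<beta> do not vanish on vertices.\<close>
lemma alpha_beta_nonzero: "alpha (g,[]) \<noteq> 0" "beta (g,[]) \<noteq> 0"
  using antipode_Phi[of "(g,[])", OF is_path_vertex, THEN conjunct1] by (auto simp: splits5_vertex eps_def plen_def)

text \<open>Axiom (v) on a vertex g gives S(g) g = 1 = g S(g).\<close>
lemma vinv_left: "vmul M (vinv S g) g = one_v u"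
proof -
  have "alpha (g,[]) * M (vinv S g,[]) (g,[]) r = alpha (g,[]) * u r" for r
    using antipode[of "(g,[])" r, OF is_path_vertex, THEN conjunct1] by (simp add: splits3_vertex S_vertex vmult_delta)
  then have "delta (vmul M (vinv S g) g,[]) = u"
    using alpha_beta_nonzero(1)[of g] by (simp add: M_vertices fun_eq_iff)
  then show ?thesis using unit_vertex by (auto dest: delta_inj)
qed

lemma vinv_right: "vmul M g (vinv S g) = one_v u"
proof -
  have "beta (g,[]) * M (g,[]) (vinv S g,[]) r = beta (g,[]) * u r" for r
    using antipode[of "(g,[])" r, OF is_path_vertex, THEN conjunct2] by (simp add: splits3_vertex S_vertex vmult_delta)
  then have "delta (vmul M g (vinv S g),[]) = u"
    using alpha_beta_nonzero(2)[of g] by (simp add: M_vertices fun_eq_iff)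
  then show ?thesis using unit_vertex by (auto dest: delta_inj)
qed

lemma group_Vgroup: "group (Vgroup M u)"
  by (rule groupI) (auto simp: Vgroup_def vmul_assoc intro: vinv_left)

lemma inv_Vgroup: "inv\<^bsub>Vgroup M u\<^esub> g = vinv S g"
  using group.inv_equality[OF group_Vgroup, of "vinv S g" g] by (simp add: Vgroup_def vinv_left)

subsection \<open>Vertices act on the spans of arrows\<close>

text \<open>Multiplying an arrow h \<rightarrow> g by a vertex f on either side gives a (t,s)-skew-primitive
  element of degree 1, hence a combination of arrows between the translated vertices.\<close>
lemma M_vertex_arrow:
  assumes "p \<in> arrow_paths Q g h"
  shows "M (f,[]) p \<in> arrspan Q (vmul M f g) (vmul M f h)"
proof -
  obtain a where a: "a \<in> arr Q" "src Q a = h" "tgt Q a = g" and p: "p = (h,[a])"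
    using assms by (rule arrow_pathsE)
  have path: "is_path Q p" using assms by (rule arrow_paths_is_path)
  show ?thesis
  proof (rule skew_primitive_in_arrspan)
    show "M (f,[]) p \<in> kQ Q" using M_kQ path by simp
    show "\<forall>l r. comul Q (M (f,[]) p) (l,r) =
        M (f,[]) p l * delta (vmul M f h,[]) r + delta (vmul M f g,[]) l * M (f,[]) p r"
      using M_comul[of "(f,[])" p] path a unfolding p by (simp add: splits2_vertex splits2_arrow M_vertices)
    show "\<forall>q\<in>supp (M (f,[]) p). plen q = 1"
      using M_degree[of "(f,[])" p] path unfolding p by (simp add: plen_def)
  qed
qed

lemma M_arrow_vertex:
  assumes "p \<in> arrow_paths Q g h"
  shows "M p (f,[]) \<in> arrspan Q (vmul M g f) (vmul M h f)"
proof -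
  obtain a where a: "a \<in> arr Q" "src Q a = h" "tgt Q a = g" and p: "p = (h,[a])"
    using assms by (rule arrow_pathsE)
  have path: "is_path Q p" using assms by (rule arrow_paths_is_path)
  show ?thesis
  proof (rule skew_primitive_in_arrspan)
    show "M p (f,[]) \<in> kQ Q" using M_kQ path by simp
    show "\<forall>l r. comul Q (M p (f,[])) (l,r) =
        M p (f,[]) l * delta (vmul M h f,[]) r + delta (vmul M g f,[]) l * M p (f,[]) r"
      using M_comul[of p "(f,[])"] path a unfolding p by (simp add: splits2_vertex splits2_arrow M_vertices)
    show "\<forall>q\<in>supp (M p (f,[])). plen q = 1"
      using M_degree[of p "(f,[])"] path unfolding p by (simp add: plen_def)
  qed
qed

lemma lact_arrspan:
  assumes m: "m \<in> arrspan Q g h"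
  shows "lact M f m \<in> arrspan Q (vmul M f g) (vmul M f h)"
proof -
  have "lact M f m = (\<Sum>p\<in>supp m. scal (m p) (lact M f (delta p)))"
    using m unfolding arrspan_free_on by (rule linear_on_expansion[OF linear_on_lact])
  also have "\<dots> \<in> arrspan Q (vmul M f g) (vmul M f h)"
    unfolding arrspan_free_on lact_delta
  proof (intro free_on_sum free_on_scal)
    fix p assume "p \<in> supp m"
    then have "p \<in> arrow_paths Q g h" using m by (auto simp: arrspan_free_on free_on_def)
    then show "M (f,[]) p \<in> free_on (arrow_paths Q (vmul M f g) (vmul M f h))"
      by (rule M_vertex_arrow[unfolded arrspan_free_on])
  qed
  finally show ?thesis .
qed

lemma ract_arrspan:
  assumes m: "m \<in> arrspan Q g h"
  shows "ract M m f \<in> arrspan Q (vmul M g f) (vmul M h f)"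
proof -
  have "ract M m f = (\<Sum>p\<in>supp m. scal (m p) (ract M (delta p) f))"
    using m unfolding arrspan_free_on by (rule linear_on_expansion[OF linear_on_ract])
  also have "\<dots> \<in> arrspan Q (vmul M g f) (vmul M h f)"
    unfolding arrspan_free_on ract_delta
  proof (intro free_on_sum free_on_scal)
    fix p assume "p \<in> supp m"
    then have "p \<in> arrow_paths Q g h" using m by (auto simp: arrspan_free_on free_on_def)
    then show "M p (f,[]) \<in> free_on (arrow_paths Q (vmul M g f) (vmul M h f))"
      by (rule M_arrow_vertex[unfolded arrspan_free_on])
  qed
  finally show ?thesis .
qed

lemma lact_unit:
  assumes "m \<in> arrspan Q g h"
  shows "lact M (one_v u) m = m"
proof -
  have "lact M (one_v u) m = scal 1 m"
  proof (rule linear_on_agree[where F = "lact M (one_v u)" and G = "\<lambda>x. x"])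
    fix p assume "p \<in> arrow_paths Q g h"
    then show "lact M (one_v u) (delta p) = scal 1 (delta p)"
      by (simp add: lact_delta M_unit_left arrow_paths_is_path)
  qed (use assms in \<open>simp_all add: linear_on_lact linear_on_id arrspan_free_on\<close>)
  then show ?thesis by simp
qed

lemma ract_unit:
  assumes "m \<in> arrspan Q g h"
  shows "ract M m (one_v u) = m"
proof -
  have "ract M m (one_v u) = scal 1 m"
  proof (rule linear_on_agree[where F = "(\<lambda>x. ract M x (one_v u))" and G = "\<lambda>x. x"])
    fix p assume "p \<in> arrow_paths Q g h"
    then show "ract M (delta p) (one_v u) = scal 1 (delta p)"
      by (simp add: ract_delta M_unit_right arrow_paths_is_path)
  qed (use assms in \<open>simp_all add: linear_on_ract linear_on_id arrspan_free_on\<close>)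
  then show ?thesis by simp
qed

text \<open>Axiom (i) with two vertices and one arrow h \<rightarrow> g: the reassociator on the two
  summands of \<Delta>(arrow) contributes \<Phi> at h on one side and at g on the other.\<close>
lemma quasi_assoc_arrow:
  assumes "p \<in> arrow_paths Q g h"
  shows "vmult M (delta (e,[])) (M (f,[]) p) r * Phi (e,[]) (f,[]) (h,[]) =
           Phi (e,[]) (f,[]) (g,[]) * vmult M (M (e,[]) (f,[])) (delta p) r"
    and "vmult M (delta p) (M (e,[]) (f,[])) r * Phi (h,[]) (e,[]) (f,[]) =
           Phi (g,[]) (e,[]) (f,[]) * vmult M (M p (e,[])) (delta (f,[])) r"
    and "vmult M (delta (e,[])) (M p (f,[])) r * Phi (e,[]) (h,[]) (f,[]) =
           Phi (e,[]) (g,[]) (f,[]) * vmult M (M (e,[]) p) (delta (f,[])) r"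
proof -
  obtain a where a: "a \<in> arr Q" "src Q a = h" "tgt Q a = g" and p: "p = (h,[a])"
    using assms by (rule arrow_pathsE)
  have path: "is_path Q p" using assms by (rule arrow_paths_is_path)
  show "vmult M (delta (e,[])) (M (f,[]) p) r * Phi (e,[]) (f,[]) (h,[]) =
      Phi (e,[]) (f,[]) (g,[]) * vmult M (M (e,[]) (f,[])) (delta p) r"
    using quasi_assoc[of "(e,[])" "(f,[])" p r] path a unfolding p
    by (simp add: splits2_vertex splits2_arrow Phi_degree plen_def)
  show "vmult M (delta p) (M (e,[]) (f,[])) r * Phi (h,[]) (e,[]) (f,[]) =
      Phi (g,[]) (e,[]) (f,[]) * vmult M (M p (e,[])) (delta (f,[])) r"
    using quasi_assoc[of p "(e,[])" "(f,[])" r] path a unfolding p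
    by (simp add: splits2_vertex splits2_arrow Phi_degree plen_def)
  show "vmult M (delta (e,[])) (M p (f,[])) r * Phi (e,[]) (h,[]) (f,[]) =
      Phi (e,[]) (g,[]) (f,[]) * vmult M (M (e,[]) p) (delta (f,[])) r"
    using quasi_assoc[of "(e,[])" p "(f,[])" r] path a unfolding p
    by (simp add: splits2_vertex splits2_arrow Phi_degree plen_def)
qed

lemma lact_lact:
  assumes m: "m \<in> arrspan Q g h"
  shows "lact M e (lact M f m) =
    scal (Phi (e,[]) (f,[]) (g,[]) / Phi (e,[]) (f,[]) (h,[])) (lact M (vmul M e f) m)"
proof -
  have basis: "lact M e (lact M f (delta p)) =
      scal (Phi (e,[]) (f,[]) (g,[]) / Phi (e,[]) (f,[]) (h,[])) (lact M (vmul M e f) (delta p))"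
    if p: "p \<in> arrow_paths Q g h" for p
  proof
    fix r
    have "lact M e (lact M f (delta p)) r * Phi (e,[]) (f,[]) (h,[]) =
        Phi (e,[]) (f,[]) (g,[]) * lact M (vmul M e f) (delta p) r"
      using quasi_assoc_arrow(1)[OF p, of e f r] by (simp add: lact_def vmult_delta M_vertices)
    then show "lact M e (lact M f (delta p)) r =
        scal (Phi (e,[]) (f,[]) (g,[]) / Phi (e,[]) (f,[]) (h,[])) (lact M (vmul M e f) (delta p)) r"
      using Phi_vertices_nonzero by (simp add: scal_def field_simps)
  qed
  have lin: "linear_on (arrow_paths Q g h) (\<lambda>m. lact M e (lact M f m))"
    using lact_arrspan
    by (intro linear_on_comp[OF linear_on_lact linear_on_lact]) (auto simp: arrspan_free_on)
  show ?thesis using linear_on_agree[OF lin linear_on_lact basis] m by (simp add: arrspan_free_on)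
qed

lemma ract_ract:
  assumes m: "m \<in> arrspan Q g h"
  shows "ract M (ract M m e) f =
    scal (Phi (h,[]) (e,[]) (f,[]) / Phi (g,[]) (e,[]) (f,[])) (ract M m (vmul M e f))"
proof -
  have basis: "ract M (ract M (delta p) e) f =
      scal (Phi (h,[]) (e,[]) (f,[]) / Phi (g,[]) (e,[]) (f,[])) (ract M (delta p) (vmul M e f))"
    if p: "p \<in> arrow_paths Q g h" for p
  proof
    fix r
    have "ract M (ract M (delta p) e) f r * Phi (g,[]) (e,[]) (f,[]) =
        Phi (h,[]) (e,[]) (f,[]) * ract M (delta p) (vmul M e f) r"
      using quasi_assoc_arrow(2)[OF p, of e f r] by (simp add: ract_def vmult_delta M_vertices mult.commute)
    then show "ract M (ract M (delta p) e) f r =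
        scal (Phi (h,[]) (e,[]) (f,[]) / Phi (g,[]) (e,[]) (f,[])) (ract M (delta p) (vmul M e f)) r"
      using Phi_vertices_nonzero by (simp add: scal_def field_simps)
  qed
  have lin: "linear_on (arrow_paths Q g h) (\<lambda>m. ract M (ract M m e) f)"
    using ract_arrspan
    by (intro linear_on_comp[OF linear_on_ract linear_on_ract]) (auto simp: arrspan_free_on)
  show ?thesis using linear_on_agree[OF lin linear_on_ract basis] m by (simp add: arrspan_free_on)
qed

lemma ract_lact:
  assumes m: "m \<in> arrspan Q g h"
  shows "ract M (lact M e m) f =
    scal (Phi (e,[]) (h,[]) (f,[]) / Phi (e,[]) (g,[]) (f,[])) (lact M e (ract M m f))"
proof -
  have basis: "ract M (lact M e (delta p)) f =
      scal (Phi (e,[]) (h,[]) (f,[]) / Phi (e,[]) (g,[]) (f,[])) (lact M e (ract M (delta p) f))"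
    if p: "p \<in> arrow_paths Q g h" for p
  proof
    fix r
    have "ract M (lact M e (delta p)) f r * Phi (e,[]) (g,[]) (f,[]) =
        Phi (e,[]) (h,[]) (f,[]) * lact M e (ract M (delta p) f) r"
      using quasi_assoc_arrow(3)[OF p, of e f r]
      by (simp add: lact_def ract_def vmult_delta M_vertices mult.commute)
    then show "ract M (lact M e (delta p)) f r =
        scal (Phi (e,[]) (h,[]) (f,[]) / Phi (e,[]) (g,[]) (f,[])) (lact M e (ract M (delta p) f)) r"
      using Phi_vertices_nonzero by (simp add: scal_def field_simps)
  qed
  have lin1: "linear_on (arrow_paths Q g h) (\<lambda>m. ract M (lact M e m) f)"
    using lact_arrspan
    by (intro linear_on_comp[OF linear_on_ract linear_on_lact]) (auto simp: arrspan_free_on)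
  have lin2: "linear_on (arrow_paths Q g h) (\<lambda>m. lact M e (ract M m f))"
    using ract_arrspan
    by (intro linear_on_comp[OF linear_on_lact linear_on_ract]) (auto simp: arrspan_free_on)
  show ?thesis using linear_on_agree[OF lin1 lin2 basis] m by (simp add: arrspan_free_on)
qed

subsection \<open>Translation by a vertex is an isomorphism of arrow spans\<close>

lemma vinv_cancel_left: "vmul M (vinv S f) (vmul M f g) = g"
  by (simp add: vmul_assoc[symmetric] vinv_left)

lemma vinv_cancel_right: "vmul M (vmul M g f) (vinv S f) = g"
  by (simp add: vmul_assoc vinv_right)

text \<open>By the quasi-associativity relations, translating by f and then by f^{-1} is a
  nonzero multiple of the identity, in either order.\<close>
lemma lact_bij: "bij_betw (lact M f) (arrspan Q g h) (arrspan Q (vmul M f g) (vmul M f h))"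
  unfolding arrspan_free_on
proof (rule bij_betw_if_inverse_up_to_scalars[where R = "lact M (vinv S f)"
      and c = "Phi (vinv S f,[]) (f,[]) (g,[]) / Phi (vinv S f,[]) (f,[]) (h,[])"
      and d = "Phi (f,[]) (vinv S f,[]) (vmul M f g,[]) / Phi (f,[]) (vinv S f,[]) (vmul M f h,[])"])
  show "lact M f ` free_on (arrow_paths Q g h) \<subseteq> free_on (arrow_paths Q (vmul M f g) (vmul M f h))"
    using lact_arrspan unfolding arrspan_free_on by blast
  show "lact M (vinv S f) ` free_on (arrow_paths Q (vmul M f g) (vmul M f h)) \<subseteq> free_on (arrow_paths Q g h)"
    using lact_arrspan[of _ "vmul M f g" "vmul M f h" "vinv S f"]
    unfolding arrspan_free_on vinv_cancel_left by blast
  show "lact M (vinv S f) (lact M f x) =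
      scal (Phi (vinv S f,[]) (f,[]) (g,[]) / Phi (vinv S f,[]) (f,[]) (h,[])) x"
    if "x \<in> free_on (arrow_paths Q g h)" for x
    using that lact_lact lact_unit by (simp add: arrspan_free_on vinv_left)
  show "lact M f (lact M (vinv S f) y) =
      scal (Phi (f,[]) (vinv S f,[]) (vmul M f g,[]) / Phi (f,[]) (vinv S f,[]) (vmul M f h,[])) y"
    if "y \<in> free_on (arrow_paths Q (vmul M f g) (vmul M f h))" for y
    using that lact_lact lact_unit by (simp add: arrspan_free_on vinv_right)
qed (simp_all add: linear_on_lact Phi_vertices_nonzero)

lemma ract_bij: "bij_betw (\<lambda>m. ract M m f) (arrspan Q g h) (arrspan Q (vmul M g f) (vmul M h f))"
  unfolding arrspan_free_on
proof (rule bij_betw_if_inverse_up_to_scalars[where R = "\<lambda>m. ract M m (vinv S f)"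
      and c = "Phi (h,[]) (f,[]) (vinv S f,[]) / Phi (g,[]) (f,[]) (vinv S f,[])"
      and d = "Phi (vmul M h f,[]) (vinv S f,[]) (f,[]) / Phi (vmul M g f,[]) (vinv S f,[]) (f,[])"])
  show "(\<lambda>m. ract M m f) ` free_on (arrow_paths Q g h) \<subseteq> free_on (arrow_paths Q (vmul M g f) (vmul M h f))"
    using ract_arrspan unfolding arrspan_free_on by blast
  show "(\<lambda>m. ract M m (vinv S f)) ` free_on (arrow_paths Q (vmul M g f) (vmul M h f)) \<subseteq> free_on (arrow_paths Q g h)"
    using ract_arrspan[of _ "vmul M g f" "vmul M h f" "vinv S f"]
    unfolding arrspan_free_on vinv_cancel_right by blast
  show "ract M (ract M x f) (vinv S f) =
      scal (Phi (h,[]) (f,[]) (vinv S f,[]) / Phi (g,[]) (f,[]) (vinv S f,[])) x"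
    if "x \<in> free_on (arrow_paths Q g h)" for x
    using that ract_ract ract_unit by (simp add: arrspan_free_on vinv_right)
  show "ract M (ract M y (vinv S f)) f =
      scal (Phi (vmul M h f,[]) (vinv S f,[]) (f,[]) / Phi (vmul M g f,[]) (vinv S f,[]) (f,[])) y"
    if "y \<in> free_on (arrow_paths Q (vmul M g f) (vmul M h f))" for y
    using that ract_ract ract_unit by (simp add: arrspan_free_on vinv_left)
qed (simp_all add: linear_on_ract Phi_vertices_nonzero)

text \<open>Counting arrows: translating {}^1M^c on the left by g^{-1}, on the right by g and
  then on the right by x gives {}^{g^{-1}cgx}M^x.\<close>
lemma arrows_conjugate:
  "\<exists>\<phi>. bij_betw \<phi> (arrows_between Q x (vmul M (vmul M (vmul M (vinv S g) c) g) x))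
                  (arrows_between Q (one_v u) c)"
proof -
  let ?c' = "vmul M (vinv S g) c"
  obtain \<phi>1 where 1: "bij_betw \<phi>1 (arrows_between Q (one_v u) c) (arrows_between Q (vinv S g) ?c')"
    using arrows_between_equipotent[OF lact_bij[of "vinv S g" c "one_v u"] linear_on_lact] by auto
  obtain \<phi>2 where 2: "bij_betw \<phi>2 (arrows_between Q (vinv S g) ?c')
      (arrows_between Q (one_v u) (vmul M ?c' g))"
    using arrows_between_equipotent[OF ract_bij[of g ?c' "vinv S g"] linear_on_ract] by (auto simp: vinv_left)
  obtain \<phi>3 where 3: "bij_betw \<phi>3 (arrows_between Q (one_v u) (vmul M ?c' g))
      (arrows_between Q x (vmul M (vmul M ?c' g) x))"
    using arrows_between_equipotent[OF ract_bij[of x "vmul M ?c' g" "one_v u"] linear_on_ract] by auto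
  have "bij_betw (\<phi>3 \<circ> (\<phi>2 \<circ> \<phi>1)) (arrows_between Q (one_v u) c)
      (arrows_between Q x (vmul M (vmul M ?c' g) x))"
    using bij_betw_trans[OF bij_betw_trans[OF 1 2] 3] .
  then show ?thesis using bij_betw_inv_into by blast
qed

end

theorem mainTheorem2:
  fixes Q :: "('v,'a) quiver"
    and M :: "('v,'a) path \<Rightarrow> ('v,'a) path \<Rightarrow> ('v,'a,'k::field) vec"
    and u :: "('v,'a,'k) vec"
    and Phi Phiinv :: "('v,'a) path \<Rightarrow> ('v,'a) path \<Rightarrow> ('v,'a) path \<Rightarrow> 'k"
    and S :: "('v,'a) path \<Rightarrow> ('v,'a,'k) vec"
    and alpha beta :: "('v,'a) path \<Rightarrow> 'k"
  assumes "graded_majid Q M u Phi Phiinv S alpha beta"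
  shows "(\<forall>g h. \<exists>x. M (g, []) (h, []) = delta (x, [])) \<and>
    group (Vgroup M u) \<and>
    u = delta (one_v u, []) \<and>
    (\<forall>g. S (g, []) = delta (inv\<^bsub>Vgroup M u\<^esub> g, [])) \<and>
    (\<forall>f g h. lact M f ` arrspan Q g h = arrspan Q (vmul M f g) (vmul M f h)) \<and>
    (\<forall>f g h. (\<lambda>m. ract M m f) ` arrspan Q g h = arrspan Q (vmul M g f) (vmul M h f)) \<and>
    (\<forall>e f g h m. m \<in> arrspan Q g h \<longrightarrow>
       lact M e (lact M f m) =
         scal (Phi (e,[]) (f,[]) (g,[]) / Phi (e,[]) (f,[]) (h,[])) (lact M (vmul M e f) m) \<and>
       ract M (ract M m e) f =
         scal (Phi (h,[]) (e,[]) (f,[]) / Phi (g,[]) (e,[]) (f,[])) (ract M m (vmul M e f)) \<and>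
       ract M (lact M e m) f =
         scal (Phi (e,[]) (h,[]) (f,[]) / Phi (e,[]) (g,[]) (f,[])) (lact M e (ract M m f))) \<and>
    (\<forall>x g c. \<exists>\<phi>. bij_betw \<phi>
       (arrows_between Q x
          (vmul M (vmul M (vmul M (inv\<^bsub>Vgroup M u\<^esub> g) c) g) x))
       (arrows_between Q (one_v u) c))"
proof -
  interpret graded_majid_kQ Q M u Phi Phiinv S alpha beta
    by (rule graded_majid_kQ.intro) (rule assms)
  show ?thesis
    using M_vertices group_Vgroup unit_vertex S_vertex lact_lact ract_ract ract_lact arrows_conjugate
      bij_betw_imp_surj_on[OF lact_bij] bij_betw_imp_surj_on[OF ract_bij]
    by (simp add: inv_Vgroup) blast
qed

end
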